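(* For every command $c$ and stores $\sigma,\sigma'$ of the While-language: $(c,\sigma)\Rightarrow_B\sigma'$ if and only if $(c,\sigma)\Downarrow\mathsf{conv}\ \sigma'$.
   Context: While-language syntax: variables $x$ range over a countably infinite set $\mathit{Var}$; $n$ ranges over natural numbers; values are $v ::= \mathsf{null}\mid n$ ($\mathsf{null}$ distinct from every natural number); expressions are $e ::= v\mid x\mid e_1\oplus e_2$ with $\oplus\in\{+,-,*\}$, where $\oplus(n_1,n_2)$ is the result of the operation on naturals; commands are $c ::= \mathsf{skip}\mid\mathsf{alloc}\ x\mid x:=e\mid c_1;c_2\mid \mathsf{if}\ e\ c_1\ c_2\mid\mathsf{while}\ e\ c$. A store $\sigma$ is a finite partial map from $\mathit{Var}$ to values, with domain $\mathrm{dom}(\sigma)$, lookup $\sigma(x)$, update $\sigma[x\mapsto v]$. Expression evaluation $(e,\sigma)\Rightarrow_E v$ is the least relation with: $(v,\sigma)\Rightarrow_E v$; $(x,\sigma)\Rightarrow_E\sigma(x)$ if $x\in\mathrm{dom}(\sigma)$; if $(e_1,\sigma)\Rightarrow_E n_1$ and $(e_2,\sigma)\Rightarrow_E n_2$ with $n_1,n_2$ naturals then $(e_1\oplus e_2,\sigma)\Rightarrow_E\oplus(n_1,n_2)$. Big-step relation $(c,\sigma)\Rightarrow_B\sigma'$ is the least relation with: $(\mathsf{skip},\sigma)\Rightarrow_B\sigma$; $(\mathsf{alloc}\ x,\sigma)\Rightarrow_B\sigma[x\mapsto\mathsf{null}]$ if $x\notin\mathrm{dom}(\sigma)$; $(x:=e,\sigma)\Rightarrow_B\sigma[x\mapsto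 v]$ if $x\in\mathrm{dom}(\sigma)$ and $(e,\sigma)\Rightarrow_E v$; $(c_1;c_2,\sigma)\Rightarrow_B\sigma''$ if $(c_1,\sigma)\Rightarrow_B\sigma'$ and $(c_2,\sigma')\Rightarrow_B\sigma''$; $(\mathsf{if}\ e\ c_1\ c_2,\sigma)\Rightarrow_B\sigma'$ if $(e,\sigma)\Rightarrow_E v$, $v\ne0$, $(c_1,\sigma)\Rightarrow_B\sigma'$; $(\mathsf{if}\ e\ c_1\ c_2,\sigma)\Rightarrow_B\sigma'$ if $(e,\sigma)\Rightarrow_E0$, $(c_2,\sigma)\Rightarrow_B\sigma'$; $(\mathsf{while}\ e\ c,\sigma)\Rightarrow_B\sigma''$ if $(e,\sigma)\Rightarrow_E v$, $v\ne0$, $(c,\sigma)\Rightarrow_B\sigma'$, $(\mathsf{while}\ e\ c,\sigma')\Rightarrow_B\sigma''$; $(\mathsf{while}\ e\ c,\sigma)\Rightarrow_B\sigma$ if $(e,\sigma)\Rightarrow_E0$. Pretty-big-step semantics: outcomes $o ::= \mathsf{conv}\ \sigma\mid\mathsf{div}$; semantic commands $C ::= c\mid\mathsf{assign2}\ x\ v\mid\mathsf{seq2}\ o\ c\mid\mathsf{if2}\ v\ c\ c\mid\mathsf{while2}\ v\ e\ c\mid\mathsf{while3}\ o\ e\ c$. The rules for $(C,\sigma)\Downarrow o$ are: $(\mathsf{skip},\sigma)\Downarrow\mathsf{conv}\ \sigma$; $(\mathsf{alloc}\ x,\sigma)\Downarrow\mathsf{conv}\ \sigma[x\mapsto\mathsf{null}]$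 if $x\notin\mathrm{dom}(\sigma)$; $(x:=e,\sigma)\Downarrow o$ if $(e,\sigma)\Rightarrow_E v$ and $(\mathsf{assign2}\ x\ v,\sigma)\Downarrow o$; $(\mathsf{assign2}\ x\ v,\sigma)\Downarrow\mathsf{conv}\ \sigma[x\mapsto v]$ if $x\in\mathrm{dom}(\sigma)$; $(c_1;c_2,\sigma)\Downarrow o$ if $(c_1,\sigma)\Downarrow o_1$ and $(\mathsf{seq2}\ o_1\ c_2,\sigma)\Downarrow o$; $(\mathsf{seq2}\ (\mathsf{conv}\ \sigma)\ c,\sigma_0)\Downarrow o$ if $(c,\sigma)\Downarrow o$; $(\mathsf{if}\ e\ c_1\ c_2,\sigma)\Downarrow o$ if $(e,\sigma)\Rightarrow_E v$ and $(\mathsf{if2}\ v\ c_1\ c_2,\sigma)\Downarrow o$; $(\mathsf{if2}\ v\ c_1\ c_2,\sigma)\Downarrow o_1$ if $v\ne0$ and $(c_1,\sigma)\Downarrow o_1$; $(\mathsf{if2}\ 0\ c_1\ c_2,\sigma)\Downarrow o_2$ if $(c_2,\sigma)\Downarrow o_2$; $(\mathsf{while}\ e\ c,\sigma)\Downarrow o$ if $(e,\sigma)\Rightarrow_E v$ and $(\mathsf{while2}\ v\ e\ c,\sigma)\Downarrow o$; $(\mathsf{while2}\ v\ e\ c,\sigma)\Downarrow o'$ if $v\ne0$, $(c,\sigma)\Downarrow o$ and $(\mathsf{while3}\ o\ e\ c,\sigma)\Downarrow o'$; $(\mathsf{while2}\ 0\ e\ c,\sigma)\Downarrow\mathsf{conv}\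 \sigma$; $(\mathsf{while3}\ (\mathsf{conv}\ \sigma)\ e\ c,\sigma_0)\Downarrow o$ if $(\mathsf{while}\ e\ c,\sigma)\Downarrow o$; $(\mathsf{seq2}\ \mathsf{div}\ c_2,\sigma)\Downarrow\mathsf{div}$; $(\mathsf{while3}\ \mathsf{div}\ e\ c,\sigma)\Downarrow\mathsf{div}$. The relation $\Downarrow$ is the inductive interpretation (least relation closed under these rules). *)

theory Defs
  imports Main
begin

type_synonym var = nat

datatype val = Null | Num nat

datatype binop = Plus | Minus | Times

fun apply_op :: "binop \<Rightarrow> nat \<Rightarrow> nat \<Rightarrow> nat" where
  "apply_op Plus a b = a + b"
| "apply_op Minus a b = a - b"
| "apply_op Times a b = a * b"

datatype exp = Val val | Var var | BinOp binop exp exp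

datatype com = Skip | Alloc var | Assign var exp | Seq com com
  | If exp com com | While exp com

(* stores: finite partial maps var -> val; finiteness of the domain is assumed where needed *)
type_synonym store = "var \<rightharpoonup> val"

inductive eval :: "exp \<Rightarrow> store \<Rightarrow> val \<Rightarrow> bool" where
  EVal: "eval (Val v) \<sigma> v"
| EVar: "\<sigma> x = Some v \<Longrightarrow> eval (Var x) \<sigma> v"
| EOp: "eval e1 \<sigma> (Num n1) \<Longrightarrow> eval e2 \<sigma> (Num n2) \<Longrightarrow>
        eval (BinOp op e1 e2) \<sigma> (Num (apply_op op n1 n2))"

inductive bigstep :: "com \<Rightarrow> store \<Rightarrow> store \<Rightarrow> bool" where
  BSkip: "bigstep Skip \<sigma> \<sigma>"
| BAlloc: "x \<notin> dom \<sigma> \<Longrightarrow> bigstep (Alloc x) \<sigma> (\<sigma>(x \<mapsto> Null))"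
| BAssign: "x \<in> dom \<sigma> \<Longrightarrow> eval e \<sigma> v \<Longrightarrow> bigstep (Assign x e) \<sigma> (\<sigma>(x \<mapsto> v))"
| BSeq: "bigstep c1 \<sigma> \<sigma>' \<Longrightarrow> bigstep c2 \<sigma>' \<sigma>'' \<Longrightarrow> bigstep (Seq c1 c2) \<sigma> \<sigma>''"
| BIfT: "eval e \<sigma> v \<Longrightarrow> v \<noteq> Num 0 \<Longrightarrow> bigstep c1 \<sigma> \<sigma>' \<Longrightarrow> bigstep (If e c1 c2) \<sigma> \<sigma>'"
| BIfF: "eval e \<sigma> (Num 0) \<Longrightarrow> bigstep c2 \<sigma> \<sigma>' \<Longrightarrow> bigstep (If e c1 c2) \<sigma> \<sigma>'"
| BWhileT: "eval e \<sigma> v \<Longrightarrow> v \<noteq> Num 0 \<Longrightarrow> bigstep c \<sigma> \<sigma>' \<Longrightarrow>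
            bigstep (While e c) \<sigma>' \<sigma>'' \<Longrightarrow> bigstep (While e c) \<sigma> \<sigma>''"
| BWhileF: "eval e \<sigma> (Num 0) \<Longrightarrow> bigstep (While e c) \<sigma> \<sigma>"

datatype outcome = Conv store | Div

datatype scom = Cmd com | Assign2 var val | Seq2 outcome com
  | If2 val com com | While2 val exp com | While3 outcome exp com

inductive pbs :: "scom \<Rightarrow> store \<Rightarrow> outcome \<Rightarrow> bool" where
  PSkip: "pbs (Cmd Skip) \<sigma> (Conv \<sigma>)"
| PAlloc: "x \<notin> dom \<sigma> \<Longrightarrow> pbs (Cmd (Alloc x)) \<sigma> (Conv (\<sigma>(x \<mapsto> Null)))"
| PAssign: "eval e \<sigma> v \<Longrightarrow> pbs (Assign2 x v) \<sigma> r \<Longrightarrow> pbs (Cmd (Assign x e)) \<sigma> r"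
| PAssign2: "x \<in> dom \<sigma> \<Longrightarrow> pbs (Assign2 x v) \<sigma> (Conv (\<sigma>(x \<mapsto> v)))"
| PSeq: "pbs (Cmd c1) \<sigma> r1 \<Longrightarrow> pbs (Seq2 r1 c2) \<sigma> r \<Longrightarrow> pbs (Cmd (Seq c1 c2)) \<sigma> r"
| PSeq2: "pbs (Cmd c) \<sigma> r \<Longrightarrow> pbs (Seq2 (Conv \<sigma>) c) \<sigma>0 r"
| PIf: "eval e \<sigma> v \<Longrightarrow> pbs (If2 v c1 c2) \<sigma> r \<Longrightarrow> pbs (Cmd (If e c1 c2)) \<sigma> r"
| PIf2T: "v \<noteq> Num 0 \<Longrightarrow> pbs (Cmd c1) \<sigma> r1 \<Longrightarrow> pbs (If2 v c1 c2) \<sigma> r1"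
| PIf2F: "pbs (Cmd c2) \<sigma> r2 \<Longrightarrow> pbs (If2 (Num 0) c1 c2) \<sigma> r2"
| PWhile: "eval e \<sigma> v \<Longrightarrow> pbs (While2 v e c) \<sigma> r \<Longrightarrow> pbs (Cmd (While e c)) \<sigma> r"
| PWhile2T: "v \<noteq> Num 0 \<Longrightarrow> pbs (Cmd c) \<sigma> r \<Longrightarrow> pbs (While3 r e c) \<sigma> r' \<Longrightarrow>
             pbs (While2 v e c) \<sigma> r'"
| PWhile2F: "pbs (While2 (Num 0) e c) \<sigma> (Conv \<sigma>)"
| PWhile3: "pbs (Cmd (While e c)) \<sigma> r \<Longrightarrow> pbs (While3 (Conv \<sigma>) e c) \<sigma>0 r"
| PSeq2Div: "pbs (Seq2 Div c2) \<sigma> Div"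
| PWhile3Div: "pbs (While3 Div e c) \<sigma> Div"

end

theory Submission
  imports Defs
begin

text \<open>Both directions are rule inductions. For the converse, each intermediate semantic
  command is read as the big-step judgement it stands for.\<close>

lemma bigstep_imp_pbs: "bigstep c \<sigma> \<sigma>' \<Longrightarrow> pbs (Cmd c) \<sigma> (Conv \<sigma>')"
  by (induction rule: bigstep.induct) (blast intro: pbs.intros)+

text \<open>If2 and While2 keep only the guard's value, not the guard, so their reading
  has to range over the guard expressions evaluating to that value.\<close>

definition scom_bigstep :: "scom \<Rightarrow> store \<Rightarrow> store \<Rightarrow> bool" where
  "scom_bigstep C \<sigma> \<sigma>' = (case C of
       Cmd c \<Rightarrow> bigstep c \<sigma> \<sigma>'
     | Assign2 x v \<Rightarrow> x \<in> dom \<sigma> \<and> \<sigma>' = \<sigma>(x \<mapsto> v)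
     | Seq2 r c \<Rightarrow> (\<exists>\<tau>. r = Conv \<tau> \<and> bigstep c \<tau> \<sigma>')
     | If2 v c1 c2 \<Rightarrow> (\<forall>e. eval e \<sigma> v \<longrightarrow> bigstep (If e c1 c2) \<sigma> \<sigma>')
     | While2 v e c \<Rightarrow> (eval e \<sigma> v \<longrightarrow> bigstep (While e c) \<sigma> \<sigma>')
     | While3 r e c \<Rightarrow> (\<exists>\<tau>. r = Conv \<tau> \<and> bigstep (While e c) \<tau> \<sigma>'))"

lemma pbs_conv_imp_scom_bigstep:
  "pbs C \<sigma> r \<Longrightarrow> r = Conv \<sigma>' \<Longrightarrow> scom_bigstep C \<sigma> \<sigma>'"
proof (induction arbitrary: \<sigma>' rule: pbs.induct)
  case (PSeq c1 \<sigma> r1 c2 r)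
  then show ?case by (cases r1) (auto simp: scom_bigstep_def intro: bigstep.intros)
next
  case (PWhile2T v c \<sigma> r e r')
  then show ?case by (cases r) (auto simp: scom_bigstep_def intro: bigstep.intros)
qed (auto simp: scom_bigstep_def intro: bigstep.intros)

lemma pbs_imp_bigstep: "pbs (Cmd c) \<sigma> (Conv \<sigma>') \<Longrightarrow> bigstep c \<sigma> \<sigma>'"
  using pbs_conv_imp_scom_bigstep[of "Cmd c" \<sigma> "Conv \<sigma>'" \<sigma>'] by (simp add: scom_bigstep_def)

theorem theorem12:
  fixes c :: com and \<sigma> \<sigma>' :: store
  assumes "finite (dom \<sigma>)" and "finite (dom \<sigma>')"
  shows "bigstep c \<sigma> \<sigma>' \<longleftrightarrow> pbs (Cmd c) \<sigma> (Conv \<sigma>')"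
  using bigstep_imp_pbs pbs_imp_bigstep by blast

end
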